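(* Let $X$ be an arbitrary set, let $E$ be an equivalence relation on $X$ whose partition into $E$-classes is an $m$-partition $\mathcal{P}=\{X_1,\ldots,X_m\}$ (with $m$ a positive integer), and let $f\in T(X,\mathcal{P})$. Then the following are equivalent: (i) $f\in\Sigma(X,\mathcal{P})$; (ii) $\chi^{(f)}$ is a bijection of $\{1,\ldots,m\}$; (iii) $f$ is $E^*$-preserving; (iv) $f\in S_{\mathcal{P}}(X)$ and $Af^{-1}\neq\emptyset$ for every nonempty open set $A\subseteq X$.
   Context: Maps are written on the right; $Af^{-1}=\{x\mid xf\in A\}$. $T(X,\mathcal{P})=\{f\colon X\to X\mid \forall i\ \exists j:\ X_if\subseteq X_j\}$ and $\Sigma(X,\mathcal{P})=\{f\in T(X,\mathcal{P})\mid Xf\cap X_i\neq\emptyset\ \forall i\}$. For $f\in T(X,\mathcal{P})$, $\chi^{(f)}\colon\{1,\ldots,m\}\to\{1,\ldots,m\}$ is given by $i\chi^{(f)}=j$ whenever $X_if\subseteq X_j$. A map $f$ is $E^*$-preserving if $(x,y)\in E\iff(xf,yf)\in E$ for all $x,y\in X$. The topology on $X$ with $\mathcal{P}$ as a basis has as open sets exactly the unions of blocks; $S_{\mathcal{P}}(X)$ is the set of continuous selfmaps of $X$ for this topology. *)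

theory Defs
  imports "HOL-Analysis.Analysis"
begin

definition is_class_partition :: "'a set \<Rightarrow> 'a rel \<Rightarrow> nat \<Rightarrow> (nat \<Rightarrow> 'a set) \<Rightarrow> bool" where
  "is_class_partition X E m P \<longleftrightarrow>
     equiv X E \<and> X // E = P ` {1..m} \<and> inj_on P {1..m}"

definition T_part :: "'a set \<Rightarrow> nat \<Rightarrow> (nat \<Rightarrow> 'a set) \<Rightarrow> ('a \<Rightarrow> 'a) set" where
  "T_part X m P = {f. (\<forall>x\<in>X. f x \<in> X) \<and>
                      (\<forall>i\<in>{1..m}. \<exists>j\<in>{1..m}. f ` P i \<subseteq> P j)}"

definition Sigma_part :: "'a set \<Rightarrow> nat \<Rightarrow> (nat \<Rightarrow> 'a set) \<Rightarrow> ('a \<Rightarrow> 'a) set" where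
  "Sigma_part X m P = {f \<in> T_part X m P. \<forall>i\<in>{1..m}. f ` X \<inter> P i \<noteq> {}}"

definition chi :: "nat \<Rightarrow> (nat \<Rightarrow> 'a set) \<Rightarrow> ('a \<Rightarrow> 'a) \<Rightarrow> nat \<Rightarrow> nat" where
  "chi m P f i = (THE j. j \<in> {1..m} \<and> f ` P i \<subseteq> P j)"

definition E_star_preserving :: "'a set \<Rightarrow> 'a rel \<Rightarrow> ('a \<Rightarrow> 'a) \<Rightarrow> bool" where
  "E_star_preserving X E f \<longleftrightarrow> (\<forall>x\<in>X. \<forall>y\<in>X. (x, y) \<in> E \<longleftrightarrow> (f x, f y) \<in> E)"

definition part_topology :: "nat \<Rightarrow> (nat \<Rightarrow> 'a set) \<Rightarrow> 'a topology" where
  "part_topology m P = topology (\<lambda>U. \<exists>I \<subseteq> {1..m}. U = \<Union> (P ` I))"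

definition S_part :: "nat \<Rightarrow> (nat \<Rightarrow> 'a set) \<Rightarrow> ('a \<Rightarrow> 'a) set" where
  "S_part m P = {f. continuous_map (part_topology m P) (part_topology m P) f}"

end

theory Submission
  imports Defs
begin

text \<open>
  Since f maps blocks into blocks, the preimage of a union of blocks is again a union of blocks,
  namely of those blocks that the induced map chi sends into it. Hence f is always continuous,
  E-pairs correspond to equal block indices, and each of the four conditions reduces to a property
  of the endomap chi of the finite set {1..m}: (i) and (iv) say that chi is surjective, (iii) that
  it is injective, and for an endomap of a finite set both mean that chi is a bijection.
\<close>

lemma finite_endo_bij_betw_iff_inj_on:
  assumes "finite A" and "g ` A \<subseteq> A"
  shows "bij_betw g A A \<longleftrightarrow> inj_on g A"
  using endo_inj_surj[OF assms] unfolding bij_betw_def by blast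

lemma finite_endo_bij_betw_iff_surj_on:
  assumes "finite A"
  shows "bij_betw g A A \<longleftrightarrow> g ` A = A"
  using finite_surj_inj[OF assms] unfolding bij_betw_def by blast

lemma Int_Unions_disjoint_family:
  assumes "disjoint_family_on P A" "I \<subseteq> A" "J \<subseteq> A"
  shows "\<Union> (P ` I) \<inter> \<Union> (P ` J) = \<Union> (P ` (I \<inter> J))"
proof
  show "\<Union> (P ` I) \<inter> \<Union> (P ` J) \<subseteq> \<Union> (P ` (I \<inter> J))"
  proof
    fix x
    assume "x \<in> \<Union> (P ` I) \<inter> \<Union> (P ` J)"
    then obtain i j where ij: "i \<in> I" "j \<in> J" "x \<in> P i" "x \<in> P j"
      by blast
    then have "i = j"
      using assms unfolding disjoint_family_on_def by blast
    with ij show "x \<in> \<Union> (P ` (I \<inter> J))"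
      by blast
  qed
qed blast

lemma Union_eq_Union_blocks_below:
  assumes "\<forall>S \<in> \<K>. \<exists>I \<subseteq> A. S = \<Union> (P ` I)"
  shows "\<Union>\<K> = \<Union> (P ` {i \<in> A. P i \<subseteq> \<Union>\<K>})"
proof
  show "\<Union>\<K> \<subseteq> \<Union> (P ` {i \<in> A. P i \<subseteq> \<Union>\<K>})"
  proof
    fix x
    assume "x \<in> \<Union>\<K>"
    then obtain S where S: "S \<in> \<K>" "x \<in> S"
      by (rule UnionE)
    then obtain I where I: "I \<subseteq> A" "S = \<Union> (P ` I)"
      using assms by blast
    then obtain i where "i \<in> I" "x \<in> P i"
      using S(2) by blast
    moreover have "P i \<subseteq> \<Union>\<K>" "i \<in> A"
      using S I \<open>i \<in> I\<close> by auto
    ultimately show "x \<in> \<Union> (P ` {i \<in> A. P i \<subseteq> \<Union>\<K>})"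
      by blast
  qed
qed blast

lemma istopology_Unions_of_disjoint_family:
  assumes "disjoint_family_on P A"
  shows "istopology (\<lambda>U. \<exists>I \<subseteq> A. U = \<Union> (P ` I))"
  unfolding istopology_def
proof (intro conjI allI impI)
  fix S T
  assume "\<exists>I\<subseteq>A. S = \<Union> (P ` I)" and "\<exists>J\<subseteq>A. T = \<Union> (P ` J)"
  then obtain I J where I: "I \<subseteq> A" "S = \<Union> (P ` I)" and J: "J \<subseteq> A" "T = \<Union> (P ` J)"
    by blast
  then have "S \<inter> T = \<Union> (P ` (I \<inter> J))"
    using Int_Unions_disjoint_family[OF assms I(1) J(1)] by simp
  then show "\<exists>K\<subseteq>A. S \<inter> T = \<Union> (P ` K)"
    using I(1) by (meson le_infI1)
next
  fix \<K>
  assume "\<forall>S\<in>\<K>. \<exists>I\<subseteq>A. S = \<Union> (P ` I)"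
  define I where "I = {i \<in> A. P i \<subseteq> \<Union>\<K>}"
  have Union_eq: "\<Union>\<K> = \<Union> (P ` I)"
    unfolding I_def by (rule Union_eq_Union_blocks_below) fact
  show "\<exists>I\<subseteq>A. \<Union>\<K> = \<Union> (P ` I)"
    unfolding Union_eq by (rule exI[of _ I]) (auto simp: I_def)
qed

lemma openin_part_topology:
  assumes "disjoint_family_on P {1..m}"
  shows "openin (part_topology m P) U \<longleftrightarrow> (\<exists>I \<subseteq> {1..m}. U = \<Union> (P ` I))"
  unfolding part_topology_def
  using topology_inverse'[OF istopology_Unions_of_disjoint_family[OF assms]] by simp

lemma topspace_part_topology:
  assumes "disjoint_family_on P {1..m}"
  shows "topspace (part_topology m P) = \<Union> (P ` {1..m})"
  unfolding topspace_def openin_part_topology[OF assms] by blast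

locale class_partition =
  fixes X :: "'a set" and E :: "'a rel" and m :: nat and P :: "nat \<Rightarrow> 'a set"
  assumes is_class_partition: "is_class_partition X E m P"
begin

lemma equiv_E: "equiv X E"
  and quotient_eq_blocks: "X // E = P ` {1..m}"
  and inj_on_blocks: "inj_on P {1..m}"
  using is_class_partition unfolding is_class_partition_def by blast+

lemma block_in_quotient: "i \<in> {1..m} \<Longrightarrow> P i \<in> X // E"
  using quotient_eq_blocks by blast

lemma block_nonempty: "i \<in> {1..m} \<Longrightarrow> P i \<noteq> {}"
  using block_in_quotient in_quotient_imp_non_empty[OF equiv_E] by blast

lemma block_subset: "i \<in> {1..m} \<Longrightarrow> P i \<subseteq> X"
  using block_in_quotient in_quotient_imp_subset[OF equiv_E] by blast

lemma Union_blocks: "\<Union> (P ` {1..m}) = X"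
  using Union_quotient[OF equiv_E] quotient_eq_blocks by simp

lemma in_E_iff_same_block:
  assumes "i \<in> {1..m}" "k \<in> {1..m}" "x \<in> P i" "y \<in> P k"
  shows "(x, y) \<in> E \<longleftrightarrow> i = k"
proof -
  have "(x, y) \<in> E \<longleftrightarrow> P i = P k"
    using quotient_eq_iff[OF equiv_E block_in_quotient block_in_quotient] assms by simp
  also have "\<dots> \<longleftrightarrow> i = k"
    using inj_on_blocks assms(1,2) by (meson inj_on_eq_iff)
  finally show ?thesis .
qed

lemma block_index_unique:
  assumes "i \<in> {1..m}" "k \<in> {1..m}" "x \<in> P i" "x \<in> P k"
  shows "i = k"
proof -
  have "(x, x) \<in> E"
    using equiv_E block_subset assms(1,3) by (blast elim: equivE dest: refl_onD)
  then show ?thesis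
    using in_E_iff_same_block[OF assms] by simp
qed

lemma disjoint_family_on_blocks: "disjoint_family_on P {1..m}"
  unfolding disjoint_family_on_def using block_index_unique by blast

lemma openin_part_topology_iff: "openin (part_topology m P) U \<longleftrightarrow> (\<exists>I \<subseteq> {1..m}. U = \<Union> (P ` I))"
  using openin_part_topology[OF disjoint_family_on_blocks] .

lemma openin_block: "j \<in> {1..m} \<Longrightarrow> openin (part_topology m P) (P j)"
  unfolding openin_part_topology_iff by (rule exI[of _ "{j}"]) simp

lemma topspace_part_topology_eq: "topspace (part_topology m P) = X"
  using topspace_part_topology[OF disjoint_family_on_blocks] Union_blocks by simp

end

locale block_map = class_partition +
  fixes f :: "'a \<Rightarrow> 'a"
  assumes f_in_T_part: "f \<in> T_part X m P"
begin

lemma f_in_X: "x \<in> X \<Longrightarrow> f x \<in> X"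
  using f_in_T_part unfolding T_part_def by blast

lemma chi_in_and_image_subset:
  assumes i: "i \<in> {1..m}"
  shows "chi m P f i \<in> {1..m} \<and> f ` P i \<subseteq> P (chi m P f i)"
proof -
  obtain j where j: "j \<in> {1..m}" "f ` P i \<subseteq> P j"
    using f_in_T_part i unfolding T_part_def by blast
  obtain x where x: "x \<in> P i"
    using block_nonempty[OF i] by blast
  have "chi m P f i = j"
    unfolding chi_def
  proof (rule the_equality)
    show "j' = j" if "j' \<in> {1..m} \<and> f ` P i \<subseteq> P j'" for j'
      using block_index_unique[of j' j "f x"] that j x by blast
  qed (use j in blast)
  with j show ?thesis by simp
qed

lemma chi_in: "i \<in> {1..m} \<Longrightarrow> chi m P f i \<in> {1..m}"
  using chi_in_and_image_subset by blast

lemma in_block_chi: "i \<in> {1..m} \<Longrightarrow> x \<in> P i \<Longrightarrow> f x \<in> P (chi m P f i)"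
  using chi_in_and_image_subset by blast

lemma chi_eqI: "i \<in> {1..m} \<Longrightarrow> j \<in> {1..m} \<Longrightarrow> x \<in> P i \<Longrightarrow> f x \<in> P j \<Longrightarrow> chi m P f i = j"
  using block_index_unique chi_in in_block_chi by blast

lemma vimage_Union_blocks:
  assumes "J \<subseteq> {1..m}"
  shows "{x \<in> X. f x \<in> \<Union> (P ` J)} = \<Union> (P ` {i \<in> {1..m}. chi m P f i \<in> J})"
proof
  show "{x \<in> X. f x \<in> \<Union> (P ` J)} \<subseteq> \<Union> (P ` {i \<in> {1..m}. chi m P f i \<in> J})"
  proof
    fix x
    assume "x \<in> {x \<in> X. f x \<in> \<Union> (P ` J)}"
    then obtain i j where "i \<in> {1..m}" "x \<in> P i" "j \<in> J" "f x \<in> P j"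
      using Union_blocks by blast
    with assms chi_eqI show "x \<in> \<Union> (P ` {i \<in> {1..m}. chi m P f i \<in> J})"
      by blast
  qed
  show "\<Union> (P ` {i \<in> {1..m}. chi m P f i \<in> J}) \<subseteq> {x \<in> X. f x \<in> \<Union> (P ` J)}"
    using block_subset in_block_chi by blast
qed

lemma image_meets_block_iff:
  assumes j: "j \<in> {1..m}"
  shows "f ` X \<inter> P j \<noteq> {} \<longleftrightarrow> j \<in> chi m P f ` {1..m}"
proof -
  have "{x \<in> X. f x \<in> P j} = \<Union> (P ` {i \<in> {1..m}. chi m P f i = j})"
    using vimage_Union_blocks[of "{j}"] j by simp
  moreover have "f ` X \<inter> P j \<noteq> {} \<longleftrightarrow> {x \<in> X. f x \<in> P j} \<noteq> {}"
    by blast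
  ultimately show ?thesis
    using block_nonempty by auto
qed

lemma Sigma_part_iff_surj_chi: "f \<in> Sigma_part X m P \<longleftrightarrow> chi m P f ` {1..m} = {1..m}"
  using f_in_T_part image_meets_block_iff chi_in unfolding Sigma_part_def by blast

lemma E_star_preserving_iff_inj_chi: "E_star_preserving X E f \<longleftrightarrow> inj_on (chi m P f) {1..m}"
proof
  assume preserving: "E_star_preserving X E f"
  show "inj_on (chi m P f) {1..m}"
  proof (rule inj_onI)
    fix i k
    assume ik: "i \<in> {1..m}" "k \<in> {1..m}" and "chi m P f i = chi m P f k"
    obtain x y where xy: "x \<in> P i" "y \<in> P k"
      using block_nonempty ik by blast
    then have "(f x, f y) \<in> E"
      using \<open>chi m P f i = chi m P f k\<close> in_E_iff_same_block chi_in in_block_chi ik by metis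
    then have "(x, y) \<in> E"
      using preserving block_subset ik xy unfolding E_star_preserving_def by blast
    then show "i = k"
      using in_E_iff_same_block ik xy by blast
  qed
next
  assume inj: "inj_on (chi m P f) {1..m}"
  show "E_star_preserving X E f"
    unfolding E_star_preserving_def
  proof (intro ballI)
    fix x y
    assume "x \<in> X" "y \<in> X"
    then obtain i k where ik: "i \<in> {1..m}" "k \<in> {1..m}" and xy: "x \<in> P i" "y \<in> P k"
      using Union_blocks by blast
    have "(x, y) \<in> E \<longleftrightarrow> i = k"
      using in_E_iff_same_block ik xy by blast
    also have "\<dots> \<longleftrightarrow> chi m P f i = chi m P f k"
      using inj ik by (meson inj_on_eq_iff)
    also have "\<dots> \<longleftrightarrow> (f x, f y) \<in> E"
      using in_E_iff_same_block[OF chi_in chi_in in_block_chi in_block_chi] ik xy by simp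
    finally show "(x, y) \<in> E \<longleftrightarrow> (f x, f y) \<in> E" .
  qed
qed

lemma continuous_map_part_topology: "continuous_map (part_topology m P) (part_topology m P) f"
  unfolding continuous_map_def topspace_part_topology_eq
proof (intro conjI allI impI)
  show "f \<in> X \<rightarrow> X"
    using f_in_X by blast
next
  fix U
  assume "openin (part_topology m P) U"
  then obtain J where "J \<subseteq> {1..m}" "U = \<Union> (P ` J)"
    using openin_part_topology_iff by blast
  then have vimage_eq: "{x \<in> X. f x \<in> U} = \<Union> (P ` {i \<in> {1..m}. chi m P f i \<in> J})"
    using vimage_Union_blocks by simp
  show "openin (part_topology m P) {x \<in> X. f x \<in> U}"
    unfolding openin_part_topology_iff vimage_eq
    by (rule exI[of _ "{i \<in> {1..m}. chi m P f i \<in> J}"]) auto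
qed

lemma open_vimage_nonempty_iff_Sigma_part:
  "(\<forall>A. openin (part_topology m P) A \<and> A \<noteq> {} \<longrightarrow> {x \<in> X. f x \<in> A} \<noteq> {})
     \<longleftrightarrow> f \<in> Sigma_part X m P"
proof
  assume vimage_nonempty: "\<forall>A. openin (part_topology m P) A \<and> A \<noteq> {} \<longrightarrow> {x \<in> X. f x \<in> A} \<noteq> {}"
  have "{x \<in> X. f x \<in> P j} \<noteq> {}" if j: "j \<in> {1..m}" for j
    using vimage_nonempty openin_block[OF j] block_nonempty[OF j] by blast
  then have "f ` X \<inter> P j \<noteq> {}" if "j \<in> {1..m}" for j
    using that by blast
  then show "f \<in> Sigma_part X m P"
    using f_in_T_part by (simp add: Sigma_part_def)
next
  assume "f \<in> Sigma_part X m P"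
  then have meets: "f ` X \<inter> P j \<noteq> {}" if "j \<in> {1..m}" for j
    using that unfolding Sigma_part_def by blast
  show "\<forall>A. openin (part_topology m P) A \<and> A \<noteq> {} \<longrightarrow> {x \<in> X. f x \<in> A} \<noteq> {}"
  proof (intro allI impI)
    fix A
    assume "openin (part_topology m P) A \<and> A \<noteq> {}"
    then obtain I where "I \<subseteq> {1..m}" "A = \<Union> (P ` I)" "A \<noteq> {}"
      unfolding openin_part_topology_iff by blast
    then obtain j where "j \<in> {1..m}" "P j \<subseteq> A"
      by blast
    then show "{x \<in> X. f x \<in> A} \<noteq> {}"
      using meets by blast
  qed
qed

end

theorem corollary3p5:
  fixes X :: "'a set" and E :: "'a rel" and m :: nat and P :: "nat \<Rightarrow> 'a set"
    and f :: "'a \<Rightarrow> 'a"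
  assumes "m \<ge> 1"
    and "is_class_partition X E m P"
    and "f \<in> T_part X m P"
  shows "(f \<in> Sigma_part X m P \<longleftrightarrow> bij_betw (chi m P f) {1..m} {1..m})
       \<and> (bij_betw (chi m P f) {1..m} {1..m} \<longleftrightarrow> E_star_preserving X E f)
       \<and> (E_star_preserving X E f \<longleftrightarrow>
            (f \<in> S_part m P \<and>
             (\<forall>A. openin (part_topology m P) A \<and> A \<noteq> {} \<longrightarrow> {x \<in> X. f x \<in> A} \<noteq> {})))"
proof -
  interpret block_map X E m P f
    using assms(2,3) by unfold_locales
  have bij_iff_surj: "bij_betw (chi m P f) {1..m} {1..m} \<longleftrightarrow> chi m P f ` {1..m} = {1..m}"
    by (simp add: finite_endo_bij_betw_iff_surj_on)
  have bij_iff_inj: "bij_betw (chi m P f) {1..m} {1..m} \<longleftrightarrow> inj_on (chi m P f) {1..m}"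
    using chi_in by (intro finite_endo_bij_betw_iff_inj_on) auto
  show ?thesis
    using Sigma_part_iff_surj_chi E_star_preserving_iff_inj_chi continuous_map_part_topology
      open_vimage_nonempty_iff_Sigma_part bij_iff_surj bij_iff_inj
    unfolding S_part_def by blast
qed

end
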